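(* Let $D\subset\mathbb R^3$ be an open set containing the $x_2$-axis and $E=D\cap\{x: x_1^2+x_3^2<1\}$. If $0<b<1$ and $0<a<1$, then there is a constant $C>0$ such that for every $u$ with $\|u\|^{(b,\star)}_{0,a;E}<\infty$, $$|u|^{(b)}_{a;E}\le C\,\|u\|^{(b,\star)}_{0,a;E}.$$
   Context: $r_x=\sqrt{x_1^2+x_3^2}$, $r_{x,y}=\min(r_x,r_y)$. $\|u\|^{(b,\star)}_{0,a;E}=\sup_{x\in E}r_x^{\max(b,0)}|u(x)|+\sup_{x\ne y\in E}r_{x,y}^{\max(b+a,0)}\frac{|u(x)-u(y)|}{|x-y|^a}$. For $\sigma>0$ let $E_\sigma=\{x\in E: r_x>\sigma\}$, $\|u\|_{a;E_\sigma}=\sup_{E_\sigma}|u|+\sup_{x\ne y\in E_\sigma}\frac{|u(x)-u(y)|}{|x-y|^a}$, and $|u|^{(b)}_{a;E}=\sup_{\sigma>0}\sigma^{a+b}\|u\|_{a;E_\sigma}$. *)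

theory Defs
  imports "HOL-Analysis.Analysis"
begin

definition rx :: "real^3 \<Rightarrow> real" where
  "rx x = sqrt ((x$1)^2 + (x$3)^2)"

text \<open>Power t^e for t \<ge> 0, with the convention t^0 = 1 (also for t = 0).\<close>
definition wpow :: "real \<Rightarrow> real \<Rightarrow> real" where
  "wpow t e = (if e = 0 then 1 else t powr e)"

text \<open>Norms take values in [0,\<infinity>] (ennreal); a supremum over the empty set is 0.\<close>
definition star_norm :: "real \<Rightarrow> real \<Rightarrow> (real^3) set \<Rightarrow> (real^3 \<Rightarrow> real) \<Rightarrow> ennreal" where
  "star_norm b a E u =
     (SUP x\<in>E. ennreal (wpow (rx x) (max b 0) * \<bar>u x\<bar>))
   + (SUP x\<in>E. SUP y\<in>E - {x}.
        ennreal (wpow (min (rx x) (rx y)) (max (b + a) 0) * \<bar>u x - u y\<bar> / dist x y powr a))"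

definition holder_norm :: "real \<Rightarrow> (real^3) set \<Rightarrow> (real^3 \<Rightarrow> real) \<Rightarrow> ennreal" where
  "holder_norm a S u =
     (SUP x\<in>S. ennreal \<bar>u x\<bar>)
   + (SUP x\<in>S. SUP y\<in>S - {x}. ennreal (\<bar>u x - u y\<bar> / dist x y powr a))"

definition E_sigma :: "(real^3) set \<Rightarrow> real \<Rightarrow> (real^3) set" where
  "E_sigma E \<sigma> = {x \<in> E. rx x > \<sigma>}"

definition weighted_norm :: "real \<Rightarrow> real \<Rightarrow> (real^3) set \<Rightarrow> (real^3 \<Rightarrow> real) \<Rightarrow> ennreal" where
  "weighted_norm b a E u =
     (SUP \<sigma>\<in>{0<..}. ennreal (\<sigma> powr (a + b)) * holder_norm a (E_sigma E \<sigma>) u)"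

end

theory Submission
  imports Defs
begin

text \<open>The constant C = 1 works. Points of E_\<sigma> have \<sigma> < r_x < 1, so
  \<sigma>^(a+b) \<le> \<sigma>^b \<le> r_x^b and \<sigma>^(a+b) \<le> r_{x,y}^(a+b).\<close>

lemma wpow_pos: "0 < e \<Longrightarrow> wpow t e = t powr e"
  by (simp add: wpow_def)

lemma rx_lt_one: "(x$1)^2 + (x$3)^2 < 1 \<Longrightarrow> rx x < 1"
  by (simp add: rx_def real_sqrt_less_iff)

lemma powr_add_le_powr_of_less:
  fixes \<sigma> t a b :: real
  assumes "0 < \<sigma>" "\<sigma> < t" "t \<le> 1" "0 \<le> a" "0 \<le> b"
  shows "\<sigma> powr (a + b) \<le> t powr b"
proof -
  have "\<sigma> powr (a + b) \<le> \<sigma> powr b"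
    using assms by (intro powr_mono') auto
  also have "\<dots> \<le> t powr b"
    using assms by (intro powr_mono2) auto
  finally show ?thesis .
qed

lemma sup_abs_E_sigma_le:
  assumes "\<forall>x\<in>E. rx x \<le> 1" "0 < \<sigma>" "0 \<le> a" "0 < b"
  shows "ennreal (\<sigma> powr (a + b)) * (SUP x\<in>E_sigma E \<sigma>. ennreal \<bar>u x\<bar>)
           \<le> (SUP x\<in>E. ennreal (wpow (rx x) (max b 0) * \<bar>u x\<bar>))"
  unfolding SUP_mult_left_ennreal
proof (rule SUP_least)
  fix x assume "x \<in> E_sigma E \<sigma>"
  hence xE: "x \<in> E" and "\<sigma> < rx x" by (auto simp: E_sigma_def)
  hence "\<sigma> powr (a + b) * \<bar>u x\<bar> \<le> rx x powr b * \<bar>u x\<bar>"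
    using assms by (intro mult_right_mono powr_add_le_powr_of_less) auto
  hence "ennreal (\<sigma> powr (a + b)) * ennreal \<bar>u x\<bar> \<le> ennreal (wpow (rx x) (max b 0) * \<bar>u x\<bar>)"
    using assms by (simp add: wpow_pos ennreal_leI flip: ennreal_mult'')
  thus "ennreal (\<sigma> powr (a + b)) * ennreal \<bar>u x\<bar>
          \<le> (SUP x\<in>E. ennreal (wpow (rx x) (max b 0) * \<bar>u x\<bar>))"
    using xE by (intro SUP_upper2) auto
qed

lemma sup_holder_quotient_E_sigma_le:
  assumes "0 < \<sigma>" "0 < a + b"
  shows "ennreal (\<sigma> powr (a + b)) *
           (SUP x\<in>E_sigma E \<sigma>. SUP y\<in>E_sigma E \<sigma> - {x}. ennreal (\<bar>u x - u y\<bar> / dist x y powr a))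
         \<le> (SUP x\<in>E. SUP y\<in>E - {x}.
              ennreal (wpow (min (rx x) (rx y)) (max (b + a) 0) * \<bar>u x - u y\<bar> / dist x y powr a))"
  unfolding SUP_mult_left_ennreal
proof (intro SUP_least)
  fix x y assume x: "x \<in> E_sigma E \<sigma>" and y: "y \<in> E_sigma E \<sigma> - {x}"
  hence xE: "x \<in> E" and yE: "y \<in> E - {x}" and "\<sigma> < min (rx x) (rx y)"
    by (auto simp: E_sigma_def)
  hence "\<sigma> powr (a + b) * (\<bar>u x - u y\<bar> / dist x y powr a)
           \<le> min (rx x) (rx y) powr (b + a) * (\<bar>u x - u y\<bar> / dist x y powr a)"
    using assms by (subst add.commute, intro mult_right_mono powr_mono2) auto
  hence "ennreal (\<sigma> powr (a + b)) * ennreal (\<bar>u x - u y\<bar> / dist x y powr a)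
           \<le> ennreal (wpow (min (rx x) (rx y)) (max (b + a) 0) * \<bar>u x - u y\<bar> / dist x y powr a)"
    using assms by (simp add: wpow_pos add.commute ennreal_leI flip: ennreal_mult'')
  thus "ennreal (\<sigma> powr (a + b)) * ennreal (\<bar>u x - u y\<bar> / dist x y powr a)
          \<le> (SUP x\<in>E. SUP y\<in>E - {x}.
               ennreal (wpow (min (rx x) (rx y)) (max (b + a) 0) * \<bar>u x - u y\<bar> / dist x y powr a))"
    by (intro SUP_upper2[OF xE] SUP_upper2[OF yE]) auto
qed

lemma weighted_norm_le_star_norm:
  assumes "\<forall>x\<in>E. rx x \<le> 1" "0 \<le> a" "0 < b"
  shows "weighted_norm b a E u \<le> star_norm b a E u"
  unfolding weighted_norm_def
proof (rule SUP_least)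
  fix \<sigma> :: real assume "\<sigma> \<in> {0<..}"
  with assms show "ennreal (\<sigma> powr (a + b)) * holder_norm a (E_sigma E \<sigma>) u \<le> star_norm b a E u"
    unfolding holder_norm_def star_norm_def distrib_left
    by (intro add_mono sup_abs_E_sigma_le sup_holder_quotient_E_sigma_le) auto
qed

theorem lemma2p2:
  fixes D :: "(real^3) set" and a b :: real
  assumes "open D"
    and "{x :: real^3. x$1 = 0 \<and> x$3 = 0} \<subseteq> D"
    and "0 < b" "b < 1" "0 < a" "a < 1"
  shows "\<exists>C>0. \<forall>u :: real^3 \<Rightarrow> real.
           star_norm b a (D \<inter> {x. (x$1)^2 + (x$3)^2 < 1}) u < \<infinity> \<longrightarrow>
           weighted_norm b a (D \<inter> {x. (x$1)^2 + (x$3)^2 < 1}) u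
             \<le> ennreal C * star_norm b a (D \<inter> {x. (x$1)^2 + (x$3)^2 < 1}) u"
proof (intro exI[of _ 1] conjI allI impI)
  fix u :: "real^3 \<Rightarrow> real"
  have "\<forall>x\<in>D \<inter> {x. (x$1)^2 + (x$3)^2 < 1}. rx x \<le> 1"
    using rx_lt_one by fastforce
  with assms show "weighted_norm b a (D \<inter> {x. (x$1)^2 + (x$3)^2 < 1}) u
      \<le> ennreal 1 * star_norm b a (D \<inter> {x. (x$1)^2 + (x$3)^2 < 1}) u"
    using weighted_norm_le_star_norm by simp
qed simp

end
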